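(* Let $p_0,q\in\mathcal S^{d-1}$ with $p_0^\top q>0$, and consider the preference dynamics with the fixed recommendation $q_t=q$ for all $t\ge0$, i.e. $\tilde p_{t+1}=p_t+\eta_t\,(p_t^\top q)\,q$, $p_{t+1}=\tilde p_{t+1}/\|\tilde p_{t+1}\|_2$, with step sizes either constant ($\eta_t=\eta$) or decreasing ($\eta_t=\frac{\eta}{t+s}$). Let $R(T)=\sum_{t=0}^{T-1}(1-p_t^\top q)$. Then for every $T\ge 1$, \[R(T)\le C_\gamma\big((p_0^\top q)^{-2}-1\big),\qquad C_\gamma=\begin{cases}\frac{(\eta+1)^2}{\eta^2+2\eta}, & \eta_t=\eta,\\[2pt] \frac{s^2\pi^2}{6}, & \eta_t=\frac{\eta}{t+s}.\end{cases}\]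
   Context: $\mathcal S^{d-1}$ denotes the unit sphere in $\mathbb{R}^d$. In the constant step-size setting $\eta>0$ is a constant; in the decreasing step-size setting $\eta$ and $s$ are positive integers. $R(T)$ is the regret for the affinity reward $r_t=p_t^\top q_t$ relative to the maximal reward $1$. *)

theory Defs
  imports "HOL-Analysis.Analysis"
begin

fun pref_traj :: "(nat \<Rightarrow> real) \<Rightarrow> 'a::euclidean_space \<Rightarrow> 'a \<Rightarrow> nat \<Rightarrow> 'a" where
  "pref_traj eta q p0 0 = p0"
| "pref_traj eta q p0 (Suc t) =
     (let pt = pref_traj eta q p0 t;
          pt' = pt + (eta t * (pt \<bullet> q)) *\<^sub>R q
      in (1 / norm pt') *\<^sub>R pt')"

definition regret :: "(nat \<Rightarrow> real) \<Rightarrow> 'a::euclidean_space \<Rightarrow> 'a \<Rightarrow> nat \<Rightarrow> real" where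
  "regret eta q p0 T = (\<Sum>t<T. 1 - pref_traj eta q p0 t \<bullet> q)"

end

theory Submission
  imports Defs
begin

text \<open>The update stretches the q-component of p_t by the factor 1 + \<eta>_t and leaves its
  orthogonal part untouched, so the misalignment 1/(p_t \<bullet> q)^2 - 1 (the squared tangent
  of the angle between p_t and q) is divided by exactly (1 + \<eta>_t)^2 in every step.
  Since 1 - c \<le> 1/c^2 - 1 for 0 < c \<le> 1, the regret R(T) is at most the initial
  misalignment times the sum over t < T of 1 / \<Prod>{k<t} (1 + \<eta>_k)^2. For constant steps
  this is a geometric series with ratio 1/(1 + \<eta>)^2; for \<eta>_t = \<eta>/(t + s) the
  product telescopes to at least ((t + s)/s)^2, which leaves s^2 \<Sum> 1/(t + 1)^2 = s^2 \<pi>^2/6.\<close>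

lemma sum_lessThan_le_sums:
  fixes f :: "nat \<Rightarrow> real"
  assumes "f sums l" "\<And>n. 0 \<le> f n"
  shows "(\<Sum>n<N. f n) \<le> l"
  using sum_le_suminf[of f "{..<N}"] sums_summable[OF assms(1)] sums_unique[OF assms(1)] assms(2)
  by simp

lemma one_minus_le_inverse_square_minus_one:
  fixes c :: real
  assumes "0 < c" "c \<le> 1"
  shows "1 - c \<le> 1 / c\<^sup>2 - 1"
proof -
  have "c\<^sup>2 \<le> 1 + c"
    using assms power_le_one[of c 2] by simp
  then have "c\<^sup>2 * (1 - c) \<le> (1 + c) * (1 - c)"
    using assms(2) by (intro mult_right_mono) auto
  then show ?thesis
    using assms(1) by (simp add: field_simps power2_eq_square)
qed

lemma inverse_square_minus_one_nonneg:
  fixes c :: real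
  assumes "0 < c" "c \<le> 1"
  shows "0 \<le> 1 / c\<^sup>2 - 1"
  using assms power_le_one[of c 2] by (simp add: field_simps)

lemma inner_le_one_if_unit:
  fixes p q :: "'a::euclidean_space"
  assumes "norm p = 1" "norm q = 1"
  shows "p \<bullet> q \<le> 1"
  using norm_cauchy_schwarz[of p q] assms by simp

lemma pref_step:
  fixes p q :: "'a::euclidean_space" and e :: real
  assumes p: "norm p = 1" and q: "norm q = 1" and pos: "p \<bullet> q > 0" and e: "e \<ge> 0"
  defines "p' \<equiv> p + (e * (p \<bullet> q)) *\<^sub>R q"
  shows "norm ((1 / norm p') *\<^sub>R p') = 1"
    and "((1 / norm p') *\<^sub>R p') \<bullet> q > 0"
    and "1 / (((1 / norm p') *\<^sub>R p') \<bullet> q)\<^sup>2 - 1 = (1 / (p \<bullet> q)\<^sup>2 - 1) / (1 + e)\<^sup>2"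
proof -
  define c where "c = p \<bullet> q"
  have "q \<bullet> q = 1" "p \<bullet> p = 1"
    using p q by (simp_all add: dot_square_norm)
  then have inner_q: "p' \<bullet> q = (1 + e) * c"
    and "p' \<bullet> p' = 1 + (e\<^sup>2 + 2 * e) * c\<^sup>2"
    unfolding p'_def c_def
    by (simp_all add: inner_add_left inner_add_right inner_commute power2_eq_square algebra_simps)
  then have norm_sq: "(norm p')\<^sup>2 = 1 + (e\<^sup>2 + 2 * e) * c\<^sup>2"
    by (simp add: dot_square_norm)
  have "c > 0"
    using pos c_def by simp
  have "(norm p')\<^sup>2 > 0"
    unfolding norm_sq using e by (simp add: add_pos_nonneg)
  then have norm_pos: "norm p' > 0"
    by simp
  have unit_q: "((1 / norm p') *\<^sub>R p') \<bullet> q = (1 + e) * c / norm p'"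
    using inner_q by simp
  show "norm ((1 / norm p') *\<^sub>R p') = 1"
    using norm_pos by simp
  show "((1 / norm p') *\<^sub>R p') \<bullet> q > 0"
    unfolding unit_q using \<open>c > 0\<close> norm_pos e by simp
  have "1 / ((1 + e) * c / norm p')\<^sup>2 - 1 = ((norm p')\<^sup>2 - (1 + e)\<^sup>2 * c\<^sup>2) / ((1 + e)\<^sup>2 * c\<^sup>2)"
    using \<open>c > 0\<close> e norm_pos
    by (simp add: field_simps power_mult_distrib) (simp add: power2_eq_square algebra_simps)
  also have "\<dots> = (1 / c\<^sup>2 - 1) / (1 + e)\<^sup>2"
    unfolding norm_sq using \<open>c > 0\<close> e by (simp add: field_simps power2_eq_square)
  finally show "1 / (((1 / norm p') *\<^sub>R p') \<bullet> q)\<^sup>2 - 1 = (1 / (p \<bullet> q)\<^sup>2 - 1) / (1 + e)\<^sup>2"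
    unfolding unit_q c_def .
qed

lemma pref_traj_misalignment:
  fixes p0 q :: "'a::euclidean_space" and eta :: "nat \<Rightarrow> real"
  assumes "norm p0 = 1" "norm q = 1" "p0 \<bullet> q > 0" "\<And>t. eta t \<ge> 0"
  shows "norm (pref_traj eta q p0 t) = 1 \<and> pref_traj eta q p0 t \<bullet> q > 0
    \<and> 1 / (pref_traj eta q p0 t \<bullet> q)\<^sup>2 - 1 = (1 / (p0 \<bullet> q)\<^sup>2 - 1) / (\<Prod>k<t. (1 + eta k)\<^sup>2)"
proof (induction t)
  case 0
  then show ?case
    using assms by simp
next
  case (Suc t)
  then show ?case
    using pref_step[of "pref_traj eta q p0 t" q "eta t"] assms by (simp add: Let_def)
qed

lemma regret_le_misalignment_series:
  fixes p0 q :: "'a::euclidean_space" and eta :: "nat \<Rightarrow> real"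
  assumes "norm p0 = 1" "norm q = 1" "p0 \<bullet> q > 0" "\<And>t. eta t \<ge> 0"
  shows "regret eta q p0 T \<le> (1 / (p0 \<bullet> q)\<^sup>2 - 1) * (\<Sum>t<T. 1 / (\<Prod>k<t. (1 + eta k)\<^sup>2))"
  unfolding regret_def sum_distrib_left
proof (rule sum_mono)
  fix t
  let ?c = "pref_traj eta q p0 t \<bullet> q"
  have "norm (pref_traj eta q p0 t) = 1" "?c > 0"
    and misalignment: "1 / ?c\<^sup>2 - 1 = (1 / (p0 \<bullet> q)\<^sup>2 - 1) / (\<Prod>k<t. (1 + eta k)\<^sup>2)"
    using pref_traj_misalignment[OF assms] by auto
  with assms(2) have "1 - ?c \<le> 1 / ?c\<^sup>2 - 1"
    by (intro one_minus_le_inverse_square_minus_one inner_le_one_if_unit)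
  then show "1 - ?c \<le> (1 / (p0 \<bullet> q)\<^sup>2 - 1) * (1 / (\<Prod>k<t. (1 + eta k)\<^sup>2))"
    unfolding misalignment by simp
qed

lemma regret_le_if_series_le:
  fixes p0 q :: "'a::euclidean_space" and eta :: "nat \<Rightarrow> real"
  assumes "norm p0 = 1" "norm q = 1" "p0 \<bullet> q > 0" "\<And>t. eta t \<ge> 0"
    and series: "(\<Sum>t<T. 1 / (\<Prod>k<t. (1 + eta k)\<^sup>2)) \<le> C"
  shows "regret eta q p0 T \<le> C * (1 / (p0 \<bullet> q)\<^sup>2 - 1)"
proof -
  have "0 \<le> 1 / (p0 \<bullet> q)\<^sup>2 - 1"
    using assms by (intro inverse_square_minus_one_nonneg inner_le_one_if_unit)
  have "regret eta q p0 T \<le> (1 / (p0 \<bullet> q)\<^sup>2 - 1) * (\<Sum>t<T. 1 / (\<Prod>k<t. (1 + eta k)\<^sup>2))"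
    using assms(1-4) by (rule regret_le_misalignment_series)
  also have "\<dots> \<le> (1 / (p0 \<bullet> q)\<^sup>2 - 1) * C"
    using series \<open>0 \<le> 1 / (p0 \<bullet> q)\<^sup>2 - 1\<close> by (rule mult_left_mono)
  finally show ?thesis
    by (simp add: mult.commute)
qed

lemma prod_one_plus_div_ge:
  fixes eta :: real and s :: nat
  assumes "eta \<ge> 1" "s > 0"
  shows "real (t + s) / real s \<le> (\<Prod>k<t. 1 + eta / real (k + s))"
proof (induction t)
  case 0
  then show ?case
    using assms by simp
next
  case (Suc t)
  have "real s > 0" "real t + real s > 0"
    using assms(2) by simp_all
  then have "real (t + s) * (1 + 1 / real (t + s)) = real (Suc t + s)"
    by (simp add: distrib_left)
  then have "real (Suc t + s) / real s = real (t + s) / real s * (1 + 1 / real (t + s))"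
    by simp
  also have "\<dots> \<le> (\<Prod>k<t. 1 + eta / real (k + s)) * (1 + eta / real (t + s))"
    using Suc.IH assms by (intro mult_mono prod_nonneg) (auto simp: divide_right_mono)
  finally show ?case
    by simp
qed

lemma inverse_prod_one_plus_div_sq_le:
  fixes eta :: real and s :: nat
  assumes "eta \<ge> 1" "s > 0"
  shows "1 / (\<Prod>k<t. (1 + eta / real (k + s))\<^sup>2) \<le> real s ^ 2 * (1 / (real t + 1)\<^sup>2)"
proof -
  have "(real t + 1) / real s \<le> real (t + s) / real s"
    using assms(2) by (simp add: divide_right_mono)
  also have "\<dots> \<le> (\<Prod>k<t. 1 + eta / real (k + s))"
    using prod_one_plus_div_ge[OF assms] .
  finally have "((real t + 1) / real s)\<^sup>2 \<le> (\<Prod>k<t. (1 + eta / real (k + s))\<^sup>2)"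
    unfolding prod_power_distrib[symmetric] by (intro power_mono) auto
  moreover have "0 < ((real t + 1) / real s)\<^sup>2"
    using assms(2) by simp
  moreover have "0 < (\<Prod>k<t. (1 + eta / real (k + s))\<^sup>2)"
    using assms(1) by (intro prod_pos zero_less_power add_pos_nonneg) auto
  ultimately have "1 / (\<Prod>k<t. (1 + eta / real (k + s))\<^sup>2) \<le> 1 / ((real t + 1) / real s)\<^sup>2"
    by (intro divide_left_mono mult_pos_pos) auto
  then show ?thesis
    by (simp add: power_divide)
qed

lemma regret_constant_step_le:
  fixes p0 q :: "'a::euclidean_space" and eta :: real
  assumes "norm p0 = 1" "norm q = 1" "p0 \<bullet> q > 0" "eta > 0"
  shows "regret (\<lambda>_. eta) q p0 T \<le> ((eta + 1)\<^sup>2 / (eta\<^sup>2 + 2 * eta)) * (1 / (p0 \<bullet> q)\<^sup>2 - 1)"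
proof -
  define r where "r = 1 / (1 + eta)\<^sup>2"
  have "1 < (1 + eta)\<^sup>2"
    using assms(4) by (simp add: one_less_power)
  then have "0 \<le> r" "norm r < 1"
    unfolding r_def by (auto simp: divide_less_eq)
  have "0 < eta\<^sup>2 + 2 * eta"
    using assms(4) by (intro add_pos_pos) auto
  then have "1 / (1 - r) = (eta + 1)\<^sup>2 / (eta\<^sup>2 + 2 * eta)"
    unfolding r_def by (simp add: field_simps power2_eq_square)
  then have "(\<lambda>t. r ^ t) sums ((eta + 1)\<^sup>2 / (eta\<^sup>2 + 2 * eta))"
    using geometric_sums[OF \<open>norm r < 1\<close>] by simp
  then have "(\<Sum>t<T. r ^ t) \<le> (eta + 1)\<^sup>2 / (eta\<^sup>2 + 2 * eta)"
    by (rule sum_lessThan_le_sums) (use \<open>0 \<le> r\<close> in simp)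
  moreover have "(\<Sum>t<T. 1 / (\<Prod>k<t. (1 + eta)\<^sup>2)) = (\<Sum>t<T. r ^ t)"
    by (simp add: r_def power_one_over)
  ultimately show ?thesis
    using assms by (intro regret_le_if_series_le) simp_all
qed

lemma regret_decreasing_step_le:
  fixes p0 q :: "'a::euclidean_space" and eta s :: nat
  assumes "norm p0 = 1" "norm q = 1" "p0 \<bullet> q > 0" "eta > 0" "s > 0"
  shows "regret (\<lambda>t. real eta / real (t + s)) q p0 T
    \<le> (real s ^ 2 * pi ^ 2 / 6) * (1 / (p0 \<bullet> q)\<^sup>2 - 1)"
proof -
  have "(\<Sum>t<T. 1 / (\<Prod>k<t. (1 + real eta / real (k + s))\<^sup>2))
      \<le> (\<Sum>t<T. real s ^ 2 * (1 / (real t + 1)\<^sup>2))"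
    using assms(4,5) by (intro sum_mono inverse_prod_one_plus_div_sq_le) auto
  also have "\<dots> \<le> real s ^ 2 * (pi\<^sup>2 / 6)"
    unfolding sum_distrib_left[symmetric]
    by (intro mult_left_mono sum_lessThan_le_sums) (use inverse_squares_sums in \<open>simp_all add: add.commute\<close>)
  finally show ?thesis
    using assms by (intro regret_le_if_series_le) simp_all
qed

theorem proposition2:
  fixes p0 q :: "'a::euclidean_space" and T :: nat
  assumes "norm p0 = 1" and "norm q = 1" and "p0 \<bullet> q > 0" and "T \<ge> 1"
  shows "(\<forall>eta::real. eta > 0 \<longrightarrow>
            regret (\<lambda>_. eta) q p0 T
              \<le> ((eta + 1)^2 / (eta^2 + 2 * eta)) * (1 / (p0 \<bullet> q)^2 - 1))
       \<and> (\<forall>eta s :: nat. eta > 0 \<longrightarrow> s > 0 \<longrightarrow>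
            regret (\<lambda>t. real eta / real (t + s)) q p0 T
              \<le> (real s ^ 2 * pi ^ 2 / 6) * (1 / (p0 \<bullet> q)^2 - 1))"
  using regret_constant_step_le[OF assms(1-3)] regret_decreasing_step_le[OF assms(1-3)] by blast

end
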